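(* Let $G$ be an $(r,t,a_0)$-staircase graph, let $n=|E(G)|$. (1) Let $\mathcal{C}_2(G)$ be the binary code of $G$, of dimension $k$. Then $\mathcal{C}_2(G)$ is an $(n,k,r,t)_{\mathrm{seq}}$ code if and only if $G$ has girth at least $t+1$. (2) If $G$ has girth at least $t+1$, then every code over $\mathbb{F}_q$ associated to $G$ (of dimension $k$, say) is an $(n,k,r,t)_{\mathrm{seq}}$ code.
   Context: Staircase graph: Let $r\ge 2$ and $t\ge 2$ be integers, $s=\lfloor (t-1)/2\rfloor$, and $a_0$ a positive integer; if $t$ is odd assume $t\ge 3$. An $(r,t,a_0)$-staircase graph is a finite simple graph $G$ whose vertex set is a disjoint union $\{v_\infty\}\cup V_0\cup V_1\cup\cdots\cup V_s$ such that: $|V_0|=a_0$ and $v_\infty$ is adjacent to every vertex of $V_0$ and to no other vertex; for each $i$ with $0\le i\le s-1$ (if $t$ is even) or $0\le i\le s-2$ (if $t$ is odd), every vertex of $V_i$ has exactly $r$ neighbours in $V_{i+1}$ and every vertex of $V_{i+1}$ has exactly one neighbour in $V_i$; if $t$ is even, every vertex of $V_s$ has exactly $r$ neighbours in $V_s$; if $t$ is odd, every vertex of $V_{s-1}$ has exactly $r$ neighbours in $V_s$ and every vertex of $V_s$ has exactly $r+1$ neighbours in $V_{s-1}$; and there are no other edges. Codes of a staircase graph: a code over $\mathbb{F}_q$ associated to $G$ is a linear code of length $|E(G)|$ (coordinates indexed by the edges) having a parity-check matrix $H$ with rows indexed by $V(G)\setminus\{v_\infty\}$ and columns indexed by $E(G)$,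 where $H_{v,e}\neq 0$ if and only if $e$ is incident with $v$. The binary code $\mathcal{C}_2(G)$ of $G$ is the associated code over $\mathbb{F}_2$ (i.e. $H$ is the $0/1$ vertex–edge incidence matrix with the row of $v_\infty$ deleted). Girth: length of a shortest cycle ($\infty$ if there is none). Sequential-recovery LRC: an $(n,k,r,t)_{\mathrm{seq}}$ code is an $[n,k]$ linear code $\mathcal{C}\subseteq\mathbb{F}_q^n$ such that for every $E\subseteq[n]$ with $1\le|E|=u\le t$ there is an ordering $\ell_1,\dots,\ell_u$ of $E$ and sets $R_j\subseteq[n]$, $|R_j|\le r$, $R_j\cap\{\ell_j,\dots,\ell_u\}=\emptyset$, with coefficients $a_{j,i}\in\mathbb{F}_q$ such that $c_{\ell_j}=\sum_{i\in R_j}a_{j,i}c_i$ for all $c\in\mathcal{C}$, $j\in[u]$. *)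

theory Defs
  imports Main "HOL-Library.Function_Algebras" "HOL-Library.Z2" "HOL-Library.Extended_Nat"
begin

definition simple_graph :: "'v set \<Rightarrow> 'v set set \<Rightarrow> bool" where
  "simple_graph V E \<longleftrightarrow> finite V \<and> (\<forall>e\<in>E. \<exists>x y. x \<noteq> y \<and> x \<in> V \<and> y \<in> V \<and> e = {x, y})"

definition adj :: "'v set set \<Rightarrow> 'v \<Rightarrow> 'v \<Rightarrow> bool" where
  "adj E x y \<longleftrightarrow> {x, y} \<in> E \<and> x \<noteq> y"

definition nbrs :: "'v set set \<Rightarrow> 'v \<Rightarrow> 'v set" where
  "nbrs E x = {y. adj E x y}"

definition is_cycle :: "'v set \<Rightarrow> 'v set set \<Rightarrow> 'v list \<Rightarrow> bool" where
  "is_cycle V E vs \<longleftrightarrow> length vs \<ge> 3 \<and> distinct vs \<and> set vs \<subseteq> V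
     \<and> (\<forall>i. Suc i < length vs \<longrightarrow> adj E (vs ! i) (vs ! Suc i))
     \<and> adj E (last vs) (hd vs)"

definition girth :: "'v set \<Rightarrow> 'v set set \<Rightarrow> enat" where
  "girth V E = (INF vs \<in> {vs. is_cycle V E vs}. enat (length vs))"

definition staircase_graph ::
  "nat \<Rightarrow> nat \<Rightarrow> nat \<Rightarrow> 'v set \<Rightarrow> 'v set set \<Rightarrow> 'v \<Rightarrow> (nat \<Rightarrow> 'v set) \<Rightarrow> bool" where
  "staircase_graph r t a0 V E vinf L \<longleftrightarrow>
     (let s = (t - 1) div 2 in
      simple_graph V E
      \<and> V = insert vinf (\<Union>i\<le>s. L i)
      \<and> (\<forall>i\<le>s. vinf \<notin> L i)
      \<and> (\<forall>i\<le>s. \<forall>j\<le>s. i \<noteq> j \<longrightarrow> L i \<inter> L j = {})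
      \<and> card (L 0) = a0
      \<and> nbrs E vinf = L 0
      \<and> (\<forall>i. (if even t then i < s else i + 1 < s) \<longrightarrow>
            (\<forall>v\<in>L i. card (nbrs E v \<inter> L (Suc i)) = r)
          \<and> (\<forall>v\<in>L (Suc i). card (nbrs E v \<inter> L i) = 1))
      \<and> (even t \<longrightarrow> (\<forall>v\<in>L s. card (nbrs E v \<inter> L s) = r))
      \<and> (odd t \<longrightarrow> (\<forall>v\<in>L (s - 1). card (nbrs E v \<inter> L s) = r)
                  \<and> (\<forall>v\<in>L s. card (nbrs E v \<inter> L (s - 1)) = r + 1))
      \<and> (\<forall>e\<in>E.
            (\<exists>x\<in>L 0. e = {vinf, x})
          \<or> (\<exists>i. (if even t then i < s else i + 1 < s) \<and> (\<exists>x\<in>L i. \<exists>y\<in>L (Suc i). e = {x, y}))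
          \<or> (even t \<and> (\<exists>x\<in>L s. \<exists>y\<in>L s. e = {x, y}))
          \<or> (odd t \<and> (\<exists>x\<in>L (s - 1). \<exists>y\<in>L s. e = {x, y}))))"

definition is_staircase :: "nat \<Rightarrow> nat \<Rightarrow> nat \<Rightarrow> 'v set \<Rightarrow> 'v set set \<Rightarrow> 'v \<Rightarrow> bool" where
  "is_staircase r t a0 V E vinf \<longleftrightarrow> r \<ge> 2 \<and> t \<ge> 2 \<and> a0 > 0 \<and> (odd t \<longrightarrow> t \<ge> 3)
     \<and> (\<exists>L. staircase_graph r t a0 V E vinf L)"

text \<open>Words are functions from edges to the field, vanishing outside E.
  The code with parity-check matrix H (rows indexed by V - {vinf}, columns by E).\<close>
definition code_of_pcm ::
  "'v set \<Rightarrow> 'v set set \<Rightarrow> 'v \<Rightarrow> ('v \<Rightarrow> 'v set \<Rightarrow> 'f::field) \<Rightarrow> ('v set \<Rightarrow> 'f) set" where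
  "code_of_pcm V E vinf H =
     {c. (\<forall>e. e \<notin> E \<longrightarrow> c e = 0) \<and> (\<forall>v \<in> V - {vinf}. (\<Sum>e\<in>E. H v e * c e) = 0)}"

definition associated_pcm :: "'v set \<Rightarrow> 'v set set \<Rightarrow> 'v \<Rightarrow> ('v \<Rightarrow> 'v set \<Rightarrow> 'f::field) \<Rightarrow> bool" where
  "associated_pcm V E vinf H \<longleftrightarrow> (\<forall>v \<in> V - {vinf}. \<forall>e\<in>E. H v e \<noteq> 0 \<longleftrightarrow> v \<in> e)"

text \<open>The binary code: H is the 0/1 incidence matrix over F_2 (type bit).\<close>
definition binary_code :: "'v set \<Rightarrow> 'v set set \<Rightarrow> 'v \<Rightarrow> ('v set \<Rightarrow> bit) set" where
  "binary_code V E vinf = code_of_pcm V E vinf (\<lambda>v e. if v \<in> e then 1 else 0)"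

abbreviation fscale :: "'f::field \<Rightarrow> ('i \<Rightarrow> 'f) \<Rightarrow> ('i \<Rightarrow> 'f)" where
  "fscale a c \<equiv> (\<lambda>x. a * c x)"

definition code_dim :: "('i \<Rightarrow> 'f::field) set \<Rightarrow> nat" where
  "code_dim C = vector_space.dim fscale C"

text \<open>The ordering l_1..l_u is the list ls; index j (0-based) corresponds to l_{j+1},
  and {l_j,...,l_u} is set (drop j ls).\<close>
definition seq_LRC :: "'i set \<Rightarrow> nat \<Rightarrow> nat \<Rightarrow> nat \<Rightarrow> nat \<Rightarrow> ('i \<Rightarrow> 'f::field) set \<Rightarrow> bool" where
  "seq_LRC I n k r t C \<longleftrightarrow>
     finite I \<and> card I = n \<and> module.subspace fscale C \<and> (\<forall>c\<in>C. \<forall>i. i \<notin> I \<longrightarrow> c i = 0)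
     \<and> code_dim C = k
     \<and> (\<forall>F. F \<subseteq> I \<and> 1 \<le> card F \<and> card F \<le> t \<longrightarrow>
          (\<exists>ls. distinct ls \<and> set ls = F \<and>
             (\<forall>j < length ls. \<exists>R a. R \<subseteq> I \<and> card R \<le> r \<and> R \<inter> set (drop j ls) = {}
                 \<and> (\<forall>c\<in>C. c (ls ! j) = (\<Sum>i\<in>R. a i * c i)))))"

end

theory Submission
  imports Defs
begin

text \<open>Every row of the parity-check matrix has weight at most \<open>r + 1\<close>. If the girth exceeds \<open>t\<close>,
  any set of at most \<open>t\<close> erased edges is a forest, so it has a pendant edge at a vertex other
  than \<open>v\<^sub>\<infinity>\<close>; the parity check of that vertex recovers the pendant edge from at most \<open>r\<close>
  unerased edges, and the remaining erasures are handled recursively. This works over any field.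
  Conversely, the edge set of a cycle of length at most \<open>t\<close> meets every vertex in an even number
  of edges, hence supports a binary codeword, and no coordinate of that support is a combination
  of coordinates outside it.\<close>

lemma simple_graph_edge:
  assumes "simple_graph V E" "e \<in> E"
  obtains x y where "x \<noteq> y" "x \<in> V" "y \<in> V" "e = {x, y}"
  using assms unfolding simple_graph_def by blast

lemma simple_graph_finite_edges: "simple_graph V E \<Longrightarrow> finite E"
  by (rule finite_subset[of _ "Pow V"]) (auto simp: simple_graph_def)

lemma nbrs_subset:
  assumes "simple_graph V E"
  shows "nbrs E v \<subseteq> V"
proof
  fix y assume "y \<in> nbrs E v"
  then have "{v, y} \<in> E" by (simp add: nbrs_def adj_def)
  then show "y \<in> V" by (auto elim!: simple_graph_edge[OF assms] simp: doubleton_eq_iff)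
qed

lemma finite_nbrs:
  assumes "simple_graph V E"
  shows "finite (nbrs E v)"
  using finite_subset[OF nbrs_subset[OF assms]] assms by (simp add: simple_graph_def)

definition incident_edges :: "'v set set \<Rightarrow> 'v \<Rightarrow> 'v set set" where
  "incident_edges E v = {e \<in> E. v \<in> e}"

lemma card_incident_edges_le_card_nbrs:
  assumes "simple_graph V E"
  shows "card (incident_edges E v) \<le> card (nbrs E v)"
proof -
  have "incident_edges E v \<subseteq> (\<lambda>y. {v, y}) ` nbrs E v"
  proof
    fix e assume e: "e \<in> incident_edges E v"
    then obtain x y where "x \<noteq> y" "e = {x, y}"
      by (auto simp: incident_edges_def elim: simple_graph_edge[OF assms])
    then obtain w where "e = {v, w}" "v \<noteq> w" using e by (auto simp: incident_edges_def)
    then show "e \<in> (\<lambda>y. {v, y}) ` nbrs E v" using e by (auto simp: incident_edges_def nbrs_def adj_def)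
  qed
  then show ?thesis
    using finite_nbrs[OF assms] by (meson card_image_le card_mono finite_imageI order_trans)
qed

lemma distinct_last_neq_hd:
  assumes "distinct xs" "2 \<le> length xs"
  shows "last xs \<noteq> hd xs"
proof -
  have "xs \<noteq> []" "length xs - 1 < length xs" "0 < length xs" "length xs - 1 \<noteq> 0"
    using assms(2) by auto
  then show ?thesis by (simp add: nth_eq_iff_index_eq assms(1) last_conv_nth hd_conv_nth)
qed

lemma card_le_if_subset_Un:
  assumes "finite N" "N \<subseteq> A \<union> B" "card (N \<inter> A) \<le> a" "card (N \<inter> B) \<le> b"
  shows "card N \<le> a + b"
proof -
  have "N = (N \<inter> A) \<union> (N \<inter> B)" using assms(2) by blast
  then have "card N \<le> card (N \<inter> A) + card (N \<inter> B)" by (metis card_Un_le)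
  then show ?thesis using assms(3,4) by linarith
qed

definition cycle_edge :: "'v list \<Rightarrow> nat \<Rightarrow> 'v set" where
  "cycle_edge vs k = {vs ! k, vs ! (Suc k mod length vs)}"

definition cycle_edges :: "'v list \<Rightarrow> 'v set set" where
  "cycle_edges vs = cycle_edge vs ` {..<length vs}"

lemma cycle_edge_eq:
  assumes "k < length vs"
  shows "cycle_edge vs k = (if Suc k < length vs then {vs ! k, vs ! Suc k} else {last vs, hd vs})"
proof (cases "Suc k < length vs")
  case False
  then have "k = length vs - 1" "vs \<noteq> []" using assms by auto
  then show ?thesis by (simp add: cycle_edge_def last_conv_nth hd_conv_nth)
qed (simp add: cycle_edge_def)

lemma cycle_edges_subset_iff:
  assumes "vs \<noteq> []"
  shows "cycle_edges vs \<subseteq> F \<longleftrightarrow>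
    (\<forall>i. Suc i < length vs \<longrightarrow> {vs ! i, vs ! Suc i} \<in> F) \<and> {last vs, hd vs} \<in> F"
    (is "_ \<longleftrightarrow> ?path \<and> ?closing")
proof -
  have "cycle_edges vs \<subseteq> F \<longleftrightarrow> (\<forall>k < length vs. cycle_edge vs k \<in> F)"
    by (auto simp: cycle_edges_def)
  moreover have "cycle_edge vs (length vs - 1) = {last vs, hd vs}"
    using assms by (simp add: cycle_edge_eq)
  moreover have "length vs - 1 < length vs" using assms by simp
  ultimately show ?thesis
    by (metis (no_types, lifting) Suc_lessD cycle_edge_eq)
qed

lemma is_cycle_iff_cycle_edges:
  "is_cycle V E vs \<longleftrightarrow> 3 \<le> length vs \<and> distinct vs \<and> set vs \<subseteq> V \<and> cycle_edges vs \<subseteq> E"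
proof (cases "3 \<le> length vs \<and> distinct vs")
  case True
  have "vs \<noteq> []" "last vs \<noteq> hd vs"
    using True distinct_last_neq_hd[of vs] by auto
  moreover have "vs ! i \<noteq> vs ! Suc i" if "Suc i < length vs" for i
    using True that by (simp add: nth_eq_iff_index_eq)
  ultimately show ?thesis
    using True \<open>vs \<noteq> []\<close> by (auto simp: is_cycle_def adj_def cycle_edges_subset_iff)
qed (auto simp: is_cycle_def)

lemma inj_on_cycle_edge:
  assumes "distinct vs" "3 \<le> length vs"
  shows "inj_on (cycle_edge vs) {..<length vs}"
proof (rule inj_onI)
  fix k k' assume k: "k \<in> {..<length vs}" "k' \<in> {..<length vs}" and "cycle_edge vs k = cycle_edge vs k'"
  moreover have "Suc i mod length vs < length vs" for i using assms(2) by (intro mod_less_divisor) linarith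
  ultimately have "k = k' \<or> (k = Suc k' mod length vs \<and> k' = Suc k mod length vs)"
    using assms by (auto simp: cycle_edge_def doubleton_eq_iff nth_eq_iff_index_eq)
  then show "k = k'"
    using k assms(2) by (auto simp: mod_Suc split: if_splits)
qed

lemma cycle_edge_subset_set:
  assumes "k < length vs"
  shows "cycle_edge vs k \<subseteq> set vs"
proof -
  have "Suc k mod length vs < length vs" by (rule mod_less_divisor) (use assms in auto)
  then show ?thesis using assms by (simp add: cycle_edge_def)
qed

lemma card_cycle_edges: "distinct vs \<Longrightarrow> 3 \<le> length vs \<Longrightarrow> card (cycle_edges vs) = length vs"
  by (simp add: cycle_edges_def card_image inj_on_cycle_edge)

lemma card_incident_cycle_edges:
  assumes "distinct vs" "3 \<le> length vs" "v \<in> set vs"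
  shows "card (incident_edges (cycle_edges vs) v) = 2"
proof -
  define n where "n = length vs"
  obtain p where p: "p < n" "v = vs ! p" using assms(3) by (auto simp: n_def in_set_conv_nth)
  define q where "q = (if p = 0 then n - 1 else p - 1)"
  have n: "0 < n" "3 \<le> n" using assms(2) unfolding n_def by auto
  have q: "q < n" "p \<noteq> q" using n p unfolding q_def by auto
  have "Suc i mod n < n" for i using n by (intro mod_less_divisor) linarith
  then have "v \<in> cycle_edge vs k \<longleftrightarrow> k = p \<or> Suc k mod n = p" if "k < n" for k
    using that p assms(1) by (auto simp: cycle_edge_def n_def nth_eq_iff_index_eq)
  moreover have "Suc k mod n = p \<longleftrightarrow> k = q" if "k < n" for k
    using that n p unfolding q_def by (cases p) (auto simp: mod_Suc)
  ultimately have "{k \<in> {..<n}. v \<in> cycle_edge vs k} = {p, q}"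
    using p q by auto
  moreover have "incident_edges (cycle_edges vs) v = cycle_edge vs ` {k \<in> {..<n}. v \<in> cycle_edge vs k}"
    by (auto simp: incident_edges_def cycle_edges_def n_def)
  moreover have "inj_on (cycle_edge vs) {p, q}"
    by (rule inj_on_subset[OF inj_on_cycle_edge[OF assms(1,2)]]) (use p q in \<open>auto simp: n_def\<close>)
  ultimately show ?thesis using q by (simp add: card_image)
qed

lemma code_of_pcm_subspace: "module.subspace fscale (code_of_pcm V E vinf H)"
proof -
  interpret module "fscale :: 'f::field \<Rightarrow> ('v set \<Rightarrow> 'f) \<Rightarrow> _"
    by unfold_locales (auto simp: algebra_simps)
  show ?thesis
    by (auto simp: subspace_def code_of_pcm_def algebra_simps sum.distrib
        simp flip: sum_distrib_left)
qed

lemma code_of_pcm_local_recovery: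
  assumes H: "associated_pcm V E vinf H" and "finite E"
    and v: "v \<in> V - {vinf}" and e: "e \<in> incident_edges E v"
    and c: "c \<in> code_of_pcm V E vinf H"
  shows "c e = (\<Sum>i\<in>incident_edges E v - {e}. (- H v i / H v e) * c i)"
proof -
  have He: "H v e \<noteq> 0" using H v e by (auto simp: associated_pcm_def incident_edges_def)
  have "0 = (\<Sum>i\<in>E. H v i * c i)" using c v by (simp add: code_of_pcm_def)
  also have "\<dots> = (\<Sum>i\<in>incident_edges E v. H v i * c i)"
    using H v \<open>finite E\<close>
    by (intro sum.mono_neutral_right) (auto simp: associated_pcm_def incident_edges_def)
  also have "\<dots> = H v e * c e + (\<Sum>i\<in>incident_edges E v - {e}. H v i * c i)"
    using e \<open>finite E\<close> by (simp add: incident_edges_def sum.remove)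
  finally have "c e = - (\<Sum>i\<in>incident_edges E v - {e}. H v i * c i) / H v e"
    using He by (simp add: field_simps eq_neg_iff_add_eq_0)
  then show ?thesis by (simp add: sum_divide_distrib sum_negf)
qed

lemma indicator_in_binary_code:
  assumes "F \<subseteq> E" "finite E" and even: "\<And>v. v \<in> V - {vinf} \<Longrightarrow> even (card (incident_edges F v))"
  shows "(\<lambda>e. if e \<in> F then 1 else 0 :: bit) \<in> binary_code V E vinf"
proof -
  have "(\<Sum>e\<in>E. (if v \<in> e then 1 else 0) * (if e \<in> F then 1 else 0)) = (0 :: bit)"
    if v: "v \<in> V - {vinf}" for v
  proof -
    obtain k where k: "card (incident_edges F v) = 2 * k" using even[OF v] by (elim evenE)
    have "(\<Sum>e\<in>E. (if v \<in> e then 1 else 0) * (if e \<in> F then 1 else 0))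
        = (\<Sum>e\<in>incident_edges F v. 1 :: bit)"
      using assms(1,2) by (intro sum.mono_neutral_cong_right) (auto simp: incident_edges_def)
    also have "\<dots> = 2 * of_nat k" by (simp add: k)
    finally show ?thesis by simp
  qed
  then show ?thesis using assms(1) by (auto simp: binary_code_def code_of_pcm_def)
qed

lemma cycle_indicator_in_binary_code:
  assumes "simple_graph V E" "is_cycle V E vs"
  shows "(\<lambda>e. if e \<in> cycle_edges vs then 1 else 0 :: bit) \<in> binary_code V E vinf"
proof (rule indicator_in_binary_code)
  show "cycle_edges vs \<subseteq> E" "finite E"
    using assms by (simp_all add: is_cycle_iff_cycle_edges simple_graph_finite_edges)
  have "incident_edges (cycle_edges vs) v = {}" if "v \<notin> set vs" for v
    using that cycle_edge_subset_set by (fastforce simp: incident_edges_def cycle_edges_def)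
  then show "even (card (incident_edges (cycle_edges vs) v))" for v
    using assms(2) by (cases "v \<in> set vs") (simp_all add: is_cycle_def card_incident_cycle_edges)
qed

definition edge_path :: "'v set set \<Rightarrow> 'v list \<Rightarrow> bool" where
  "edge_path F ps \<longleftrightarrow> distinct ps \<and> (\<forall>i. Suc i < length ps \<longrightarrow> {ps ! i, ps ! Suc i} \<in> F)"

definition acyclic_edges :: "'v set \<Rightarrow> 'v set set \<Rightarrow> 'v set set \<Rightarrow> bool" where
  "acyclic_edges V E F \<longleftrightarrow> (\<forall>vs. is_cycle V E vs \<longrightarrow> \<not> cycle_edges vs \<subseteq> F)"

lemma edge_path_rev: "edge_path F ps \<Longrightarrow> edge_path F (rev ps)"
  unfolding edge_path_def
proof (intro conjI allI impI)
  fix i assume path: "distinct ps \<and> (\<forall>i. Suc i < length ps \<longrightarrow> {ps ! i, ps ! Suc i} \<in> F)"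
    and i: "Suc i < length (rev ps)"
  then have "{ps ! (length ps - Suc (Suc i)), ps ! Suc (length ps - Suc (Suc i))} \<in> F" by simp
  moreover have "Suc (length ps - Suc (Suc i)) = length ps - Suc i" using i by simp
  ultimately show "{rev ps ! i, rev ps ! Suc i} \<in> F"
    using i by (simp add: rev_nth insert_commute)
qed simp

lemma edge_path_snoc:
  assumes "edge_path F ps" "ps \<noteq> []" "w \<notin> set ps" "{last ps, w} \<in> F"
  shows "edge_path F (ps @ [w])"
  unfolding edge_path_def
proof (intro conjI allI impI)
  fix i assume i: "Suc i < length (ps @ [w])"
  show "{(ps @ [w]) ! i, (ps @ [w]) ! Suc i} \<in> F"
  proof (cases "Suc i < length ps")
    case False
    then have "i = length ps - 1" using i by simp
    then show ?thesis using assms(2,4) by (simp add: nth_append last_conv_nth)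
  qed (use assms(1) in \<open>simp add: edge_path_def nth_append\<close>)
qed (use assms(1,3) in \<open>simp add: edge_path_def\<close>)

lemma edge_path_closing_cycle:
  assumes path: "edge_path F ps" and "F \<subseteq> E" "set ps \<subseteq> V"
    and j: "j + 2 < length ps" and closing: "{last ps, ps ! j} \<in> F"
  shows "is_cycle V E (drop j ps)" "cycle_edges (drop j ps) \<subseteq> F"
proof -
  have "{drop j ps ! i, drop j ps ! Suc i} \<in> F" if "Suc i < length (drop j ps)" for i
    using path that by (simp add: edge_path_def)
  moreover have "last (drop j ps) = last ps" "hd (drop j ps) = ps ! j"
    using j by (simp_all add: hd_drop_conv_nth)
  ultimately show cyc: "cycle_edges (drop j ps) \<subseteq> F"
    using j closing by (simp add: cycle_edges_subset_iff)
  show "is_cycle V E (drop j ps)"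
    using path j cyc assms(2,3) by (auto simp: is_cycle_iff_cycle_edges edge_path_def dest: in_set_dropD)
qed

lemma last_of_longest_path_is_pendant:
  assumes "simple_graph V E" "F \<subseteq> E" "acyclic_edges V E F"
    and path: "edge_path F ps" "set ps \<subseteq> V" "2 \<le> length ps"
    and longest: "\<And>qs. edge_path F qs \<Longrightarrow> set qs \<subseteq> V \<Longrightarrow> length qs \<le> length ps"
  shows "incident_edges F (last ps) = {{ps ! (length ps - 2), last ps}}"
proof -
  define n where "n = length ps"
  define u where "u = last ps"
  have "ps \<noteq> []" using path(3) by auto
  then have u: "u = ps ! (n - 1)" by (simp add: u_def n_def last_conv_nth)
  have "Suc (n - 2) < n" "Suc (n - 2) = n - 1" using path(3) by (auto simp: n_def)
  then have pred_edge: "{ps ! (n - 2), u} \<in> F"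
    using path(1) u by (metis edge_path_def n_def)
  have "e = {ps ! (n - 2), u}" if e: "e \<in> F" "u \<in> e" for e
  proof -
    obtain x y where "x \<noteq> y" "x \<in> V" "y \<in> V" "e = {x, y}"
      using e assms(2) by (blast elim: simple_graph_edge[OF assms(1)])
    then obtain w where w: "e = {u, w}" "w \<noteq> u" "w \<in> V"
      using e(2) by (metis insert_commute insertE singletonD)
    have "w \<in> set ps"
    proof (rule ccontr)
      assume "w \<notin> set ps"
      then have "edge_path F (ps @ [w])"
        using path e w by (intro edge_path_snoc) (auto simp: u_def)
      then show False using longest[of "ps @ [w]"] path(2) w(3) by simp
    qed
    then obtain j where j: "j < n" "w = ps ! j" by (auto simp: n_def in_set_conv_nth)
    have "j \<noteq> n - 1" using j w u by auto
    moreover have "\<not> j + 2 < n"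
    proof
      assume "j + 2 < n"
      moreover have "{last ps, ps ! j} \<in> F" using e w j by (simp add: u_def)
      ultimately have "is_cycle V E (drop j ps)" "cycle_edges (drop j ps) \<subseteq> F"
        using edge_path_closing_cycle[OF path(1) assms(2) path(2)] by (simp_all add: n_def)
      then show False using assms(3) by (auto simp: acyclic_edges_def)
    qed
    ultimately have "j = n - 2" using j by linarith
    then show ?thesis using w j by (simp add: insert_commute)
  qed
  then have "incident_edges F u = {{ps ! (n - 2), u}}"
    unfolding incident_edges_def using pred_edge by blast
  then show ?thesis by (simp add: u_def n_def)
qed

text \<open>Both ends of a longest path are pendant, and one of them differs from \<open>vinf\<close>.\<close>
lemma acyclic_edges_pendant_edge:
  assumes sg: "simple_graph V E" and "F \<subseteq> E" "F \<noteq> {}" "acyclic_edges V E F"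
  obtains e v where "e \<in> F" "v \<noteq> vinf" "incident_edges F v = {e}"
proof -
  define P where "P ps \<longleftrightarrow> edge_path F ps \<and> set ps \<subseteq> V \<and> 2 \<le> length ps" for ps
  obtain e where "e \<in> F" using assms(3) by blast
  then obtain x y where "{x, y} \<in> F" "x \<noteq> y" "x \<in> V" "y \<in> V"
    using assms(2) by (auto elim!: simple_graph_edge[OF sg])
  then have "P [x, y]" by (auto simp: P_def edge_path_def less_Suc_eq)
  moreover have "length ps < card V + 1" if "P ps" for ps
    using that sg card_mono[of V "set ps"] distinct_card[of ps]
    by (auto simp: P_def edge_path_def simple_graph_def)
  ultimately obtain ps where ps: "P ps" and longest: "\<And>qs. P qs \<Longrightarrow> length qs \<le> length ps"
    using ex_has_greatest_nat[of P "[x, y]" length "card V + 1"] by blast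
  have longest': "length qs \<le> length ps" if "edge_path F qs" "set qs \<subseteq> V" for qs
    using longest[of qs] that ps by (cases "2 \<le> length qs") (auto simp: P_def)
  have pendant: "\<exists>e. incident_edges F (last qs) = {e}" if "P qs" "length qs = length ps" for qs
    using last_of_longest_path_is_pendant[OF sg assms(2,4)] that longest' by (simp add: P_def)
  have "P (rev ps)" using ps by (simp add: P_def edge_path_rev)
  then obtain e1 e2 where e: "incident_edges F (last ps) = {e1}" "incident_edges F (last (rev ps)) = {e2}"
    using pendant ps by (metis length_rev)
  moreover have "e1 \<in> F" "e2 \<in> F" using e by (auto simp: incident_edges_def)
  moreover have "last ps \<noteq> last (rev ps)"
    using ps distinct_last_neq_hd[of ps] by (simp add: P_def edge_path_def last_rev)
  ultimately show thesis using that by metis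
qed

lemma acyclic_edges_subset: "acyclic_edges V E F \<Longrightarrow> F' \<subseteq> F \<Longrightarrow> acyclic_edges V E F'"
  by (auto simp: acyclic_edges_def)

lemma girth_le_cycle: "is_cycle V E vs \<Longrightarrow> girth V E \<le> enat (length vs)"
  unfolding girth_def by (rule INF_lower) simp

lemma short_cycle_if_girth_less:
  assumes "girth V E < enat (t + 1)"
  obtains vs where "is_cycle V E vs" "length vs \<le> t"
  using assms by (auto simp: girth_def INF_less_iff)

lemma acyclic_edges_if_card_less_girth:
  assumes "enat (t + 1) \<le> girth V E" "finite F" "card F \<le> t"
  shows "acyclic_edges V E F"
  unfolding acyclic_edges_def
proof (intro allI impI notI)
  fix vs assume cyc: "is_cycle V E vs" and sub: "cycle_edges vs \<subseteq> F"
  have "length vs = card (cycle_edges vs)"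
    using cyc by (simp add: is_cycle_def card_cycle_edges)
  also have "\<dots> \<le> t" using card_mono[OF assms(2) sub] assms(3) by simp
  finally have "enat (length vs) < enat (t + 1)" by simp
  then show False
    using girth_le_cycle[OF cyc] assms(1) by (meson leD order_trans)
qed

definition recovery_order :: "'i set \<Rightarrow> nat \<Rightarrow> ('i \<Rightarrow> 'f::field) set \<Rightarrow> 'i list \<Rightarrow> bool" where
  "recovery_order I r C ls \<longleftrightarrow> (\<forall>j < length ls. \<exists>R a. R \<subseteq> I \<and> card R \<le> r \<and> R \<inter> set (drop j ls) = {}
      \<and> (\<forall>c\<in>C. c (ls ! j) = (\<Sum>i\<in>R. a i * c i)))"

lemma seq_LRC_iff_recovery_order:
  "seq_LRC I n k r t C \<longleftrightarrow>
     finite I \<and> card I = n \<and> module.subspace fscale C \<and> (\<forall>c\<in>C. \<forall>i. i \<notin> I \<longrightarrow> c i = 0)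
     \<and> code_dim C = k
     \<and> (\<forall>F. F \<subseteq> I \<and> 1 \<le> card F \<and> card F \<le> t \<longrightarrow>
          (\<exists>ls. distinct ls \<and> set ls = F \<and> recovery_order I r C ls))"
  by (simp add: seq_LRC_def recovery_order_def)

lemma seq_LRC_recovery_order:
  assumes "seq_LRC I n k r t C" "F \<subseteq> I" "1 \<le> card F" "card F \<le> t"
  obtains ls where "distinct ls" "set ls = F" "recovery_order I r C ls"
proof -
  from assms(1) have "\<forall>F. F \<subseteq> I \<and> 1 \<le> card F \<and> card F \<le> t \<longrightarrow>
      (\<exists>ls. distinct ls \<and> set ls = F \<and> recovery_order I r C ls)"
    unfolding seq_LRC_iff_recovery_order by (elim conjE) assumption
  then show thesis using assms(2-4) that by blast
qed

lemma recovery_order_Nil: "recovery_order I r C []"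
  by (simp add: recovery_order_def)

lemma recovery_order_Cons:
  "recovery_order I r C (x # ls) \<longleftrightarrow>
     (\<exists>R a. R \<subseteq> I \<and> card R \<le> r \<and> R \<inter> set (x # ls) = {} \<and> (\<forall>c\<in>C. c x = (\<Sum>i\<in>R. a i * c i)))
     \<and> recovery_order I r C ls"
  by (simp add: recovery_order_def All_less_Suc2)

text \<open>Peeling off pendant edges one at a time: the pendant edge at \<open>v\<close> is the only erased
  edge in the parity check of \<open>v\<close>, so it is recovered from the other \<open>\<le> r\<close> edges at \<open>v\<close>.\<close>
lemma acyclic_edges_recovery_order:
  assumes sg: "simple_graph V E"
    and deg: "\<And>v. v \<in> V - {vinf} \<Longrightarrow> card (incident_edges E v) \<le> r + 1"
    and H: "associated_pcm V E vinf H"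
    and "F \<subseteq> E" "acyclic_edges V E F"
  shows "\<exists>ls. distinct ls \<and> set ls = F \<and> recovery_order E r (code_of_pcm V E vinf H) ls"
proof -
  have "finite E" using sg by (rule simple_graph_finite_edges)
  then have "finite F" using assms(4) by (rule finite_subset[rotated])
  then show ?thesis using assms(4,5)
  proof (induction F rule: finite_remove_induct)
    case empty
    show ?case by (auto intro: recovery_order_Nil)
  next
    case (remove A)
    obtain e v where e: "e \<in> A" "v \<noteq> vinf" and pendant: "incident_edges A v = {e}"
      using acyclic_edges_pendant_edge[OF sg remove.prems(1) remove.hyps(2) remove.prems(2)] .
    have "e \<in> incident_edges E v" using pendant remove.prems(1) by (auto simp: incident_edges_def)
    moreover obtain x y where "x \<in> V" "y \<in> V" "e = {x, y}"
      using e(1) remove.prems(1) by (blast elim: simple_graph_edge[OF sg])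
    ultimately have v: "v \<in> V - {vinf}" using e(2) by (auto simp: incident_edges_def)
    obtain ls where ls: "distinct ls" "set ls = A - {e}" "recovery_order E r (code_of_pcm V E vinf H) ls"
      using remove.IH[OF e(1)] remove.prems acyclic_edges_subset by blast
    define R where "R = incident_edges E v - {e}"
    have "card R \<le> r"
      using deg[OF v] \<open>e \<in> incident_edges E v\<close> \<open>finite E\<close>
      by (simp add: R_def card_Diff_singleton incident_edges_def)
    moreover have "R \<inter> set (e # ls) = {}"
    proof -
      have "set (e # ls) = A" using ls(2) e(1) by auto
      then show ?thesis using pendant unfolding R_def incident_edges_def by blast
    qed
    moreover have "\<forall>c\<in>code_of_pcm V E vinf H. c e = (\<Sum>i\<in>R. (- H v i / H v e) * c i)"
      using code_of_pcm_local_recovery[OF H \<open>finite E\<close> v \<open>e \<in> incident_edges E v\<close>]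
      by (simp add: R_def)
    moreover have "R \<subseteq> E" by (auto simp: R_def incident_edges_def)
    ultimately have "recovery_order E r (code_of_pcm V E vinf H) (e # ls)"
      unfolding recovery_order_Cons using ls(3)
      by (intro conjI exI[of _ R] exI[of _ "\<lambda>i. - H v i / H v e"])
    moreover have "distinct (e # ls)" "set (e # ls) = A" using ls e by auto
    ultimately show ?case by blast
  qed
qed

lemma code_of_pcm_seq_LRC:
  assumes sg: "simple_graph V E"
    and deg: "\<And>v. v \<in> V - {vinf} \<Longrightarrow> card (incident_edges E v) \<le> r + 1"
    and girth: "enat (t + 1) \<le> girth V E"
    and H: "associated_pcm V E vinf H"
  shows "seq_LRC E (card E) (code_dim (code_of_pcm V E vinf H)) r t (code_of_pcm V E vinf H)"
  unfolding seq_LRC_iff_recovery_order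
proof (intro conjI allI impI ballI refl code_of_pcm_subspace)
  show "finite E" using sg by (rule simple_graph_finite_edges)
  show "c i = 0" if "c \<in> code_of_pcm V E vinf H" "i \<notin> E" for c i
    using that by (simp add: code_of_pcm_def)
  fix F assume F: "F \<subseteq> E \<and> 1 \<le> card F \<and> card F \<le> t"
  then have "finite F" using \<open>finite E\<close> finite_subset by blast
  then have "acyclic_edges V E F"
    using girth F by (blast intro: acyclic_edges_if_card_less_girth)
  then show "\<exists>ls. distinct ls \<and> set ls = F \<and> recovery_order E r (code_of_pcm V E vinf H) ls"
    using F by (blast intro: acyclic_edges_recovery_order[OF sg deg H])
qed

lemma not_recovery_order_if_support:
  assumes "c \<in> C" "c x \<noteq> 0" "\<And>i. i \<notin> set (x # xs) \<Longrightarrow> c i = 0"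
  shows "\<not> recovery_order I r C (x # xs)"
proof
  assume "recovery_order I r C (x # xs)"
  then obtain R a where R: "R \<inter> set (x # xs) = {}" and "\<forall>c\<in>C. c x = (\<Sum>i\<in>R. a i * c i)"
    unfolding recovery_order_Cons by blast
  then have "c x = (\<Sum>i\<in>R. a i * c i)" using assms(1) by blast
  also have "\<dots> = 0"
  proof (rule sum.neutral, rule ballI)
    fix i assume "i \<in> R"
    then have "i \<notin> set (x # xs)" using R by blast
    then show "a i * c i = 0" by (simp add: assms(3))
  qed
  finally show False using assms(2) by contradiction
qed

text \<open>A short cycle carries a binary codeword whose support cannot be recovered: the first
  erased edge would be a combination of coordinates on which the codeword vanishes.\<close>
lemma girth_if_binary_code_seq_LRC:
  assumes sg: "simple_graph V E" and lrc: "seq_LRC E n k r t (binary_code V E vinf)"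
  shows "enat (t + 1) \<le> girth V E"
proof (rule ccontr)
  assume "\<not> enat (t + 1) \<le> girth V E"
  then have "girth V E < enat (t + 1)" by (simp only: not_le)
  then obtain vs where cyc: "is_cycle V E vs" and "length vs \<le> t"
    by (rule short_cycle_if_girth_less)
  define F where "F = cycle_edges vs"
  have "F \<subseteq> E" "card F = length vs" "3 \<le> length vs"
    using cyc by (simp_all add: F_def is_cycle_iff_cycle_edges card_cycle_edges)
  then obtain ls where ls: "set ls = F" "recovery_order E r (binary_code V E vinf) ls"
    using seq_LRC_recovery_order[OF lrc, of F] \<open>length vs \<le> t\<close> by auto
  then obtain x xs where x: "ls = x # xs"
    using \<open>card F = length vs\<close> \<open>3 \<le> length vs\<close> by (cases ls) auto
  have "(\<lambda>e. if e \<in> F then 1 else 0 :: bit) \<in> binary_code V E vinf"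
    unfolding F_def using sg cyc by (rule cycle_indicator_in_binary_code)
  then have "\<not> recovery_order E r (binary_code V E vinf) (x # xs)"
    by (rule not_recovery_order_if_support) (use ls(1) x in auto)
  then show False using ls(2) x by simp
qed

locale staircase =
  fixes r t a0 :: nat and V :: "'v set" and E :: "'v set set" and vinf :: 'v
    and L :: "nat \<Rightarrow> 'v set"
  assumes staircase_graph: "staircase_graph r t a0 V E vinf L"
    and odd_t: "odd t \<Longrightarrow> 3 \<le> t"
begin

definition s :: nat where "s = (t - 1) div 2"

text \<open>\<open>tree_level i\<close>: between layers \<open>i\<close> and \<open>i + 1\<close> every vertex has \<open>r\<close> children and one parent.\<close>
definition tree_level :: "nat \<Rightarrow> bool" where
  "tree_level i \<longleftrightarrow> (if even t then i < s else i + 1 < s)"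

lemmas staircase_unfolded =
  staircase_graph[unfolded staircase_graph_def Let_def s_def[symmetric] tree_level_def[symmetric]]

lemma simple: "simple_graph V E"
  using staircase_unfolded by (elim conjE)

lemma V_eq: "V = insert vinf (\<Union>i\<le>s. L i)"
  using staircase_unfolded by (elim conjE)

lemma layers_disjoint: "\<forall>i\<le>s. \<forall>j\<le>s. i \<noteq> j \<longrightarrow> L i \<inter> L j = {}"
  using staircase_unfolded by (elim conjE)

lemma vinf_notin_layers: "\<forall>i\<le>s. vinf \<notin> L i"
  using staircase_unfolded by (elim conjE)

lemma tree_level_degrees: "\<forall>i. tree_level i \<longrightarrow>
    (\<forall>v\<in>L i. card (nbrs E v \<inter> L (Suc i)) = r) \<and> (\<forall>v\<in>L (Suc i). card (nbrs E v \<inter> L i) = 1)"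
  using staircase_unfolded by (elim conjE)

lemma even_top_degree: "even t \<longrightarrow> (\<forall>v\<in>L s. card (nbrs E v \<inter> L s) = r)"
  using staircase_unfolded by (elim conjE)

lemma odd_top_degrees: "odd t \<longrightarrow> (\<forall>v\<in>L (s - 1). card (nbrs E v \<inter> L s) = r)
    \<and> (\<forall>v\<in>L s. card (nbrs E v \<inter> L (s - 1)) = r + 1)"
  using staircase_unfolded by (elim conjE)

lemma edge_cases: "\<forall>e\<in>E.
      (\<exists>x\<in>L 0. e = {vinf, x})
    \<or> (\<exists>i. tree_level i \<and> (\<exists>x\<in>L i. \<exists>y\<in>L (Suc i). e = {x, y}))
    \<or> (even t \<and> (\<exists>x\<in>L s. \<exists>y\<in>L s. e = {x, y}))
    \<or> (odd t \<and> (\<exists>x\<in>L (s - 1). \<exists>y\<in>L s. e = {x, y}))"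
  using staircase_unfolded by (elim conjE)

lemma tree_level_less: "tree_level i \<Longrightarrow> i < s"
  by (auto simp: tree_level_def split: if_splits)

lemma layer_unique: "i \<le> s \<Longrightarrow> j \<le> s \<Longrightarrow> v \<in> L i \<Longrightarrow> v \<in> L j \<Longrightarrow> i = j"
  using layers_disjoint by blast

lemma nbr_cases:
  assumes v: "i \<le> s" "v \<in> L i" and y: "y \<in> nbrs E v"
  shows "(i = 0 \<and> y = vinf) \<or> (0 < i \<and> tree_level (i - 1) \<and> y \<in> L (i - 1))
    \<or> (tree_level i \<and> y \<in> L (Suc i)) \<or> (even t \<and> i = s \<and> y \<in> L s)
    \<or> (odd t \<and> i = s - 1 \<and> y \<in> L s) \<or> (odd t \<and> i = s \<and> y \<in> L (s - 1))"
proof -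
  have "v \<noteq> vinf" using v vinf_notin_layers by blast
  have "{v, y} \<in> E" "v \<noteq> y" using y by (auto simp: nbrs_def adj_def)
  from bspec[OF edge_cases this(1)] show ?thesis
  proof (elim disjE bexE exE conjE)
    fix x assume "x \<in> L 0" "{v, y} = {vinf, x}"
    then show ?thesis using \<open>v \<noteq> vinf\<close> v layer_unique[of 0 i v] by (auto simp: doubleton_eq_iff)
  next
    fix j x z assume "tree_level j" "x \<in> L j" "z \<in> L (Suc j)" "{v, y} = {x, z}"
    moreover have "Suc j \<le> s" using tree_level_less[OF \<open>tree_level j\<close>] by simp
    ultimately show ?thesis
      using v layer_unique[of j i v] layer_unique[of "Suc j" i v] by (auto simp: doubleton_eq_iff)
  next
    fix x z assume "even t" "x \<in> L s" "z \<in> L s" "{v, y} = {x, z}"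
    then show ?thesis using v layer_unique[of s i v] by (auto simp: doubleton_eq_iff)
  next
    fix x z assume "odd t" "x \<in> L (s - 1)" "z \<in> L s" "{v, y} = {x, z}"
    then show ?thesis
      using v layer_unique[of s i v] layer_unique[of "s - 1" i v] by (auto simp: doubleton_eq_iff)
  qed
qed

lemma one_le_s_if_odd: "odd t \<Longrightarrow> 1 \<le> s"
  using odd_t unfolding s_def by presburger

lemma card_nbrs_le:
  assumes "v \<in> V" "v \<noteq> vinf"
  shows "card (nbrs E v) \<le> r + 1"
proof -
  obtain i where i: "i \<le> s" "v \<in> L i" using V_eq assms by blast
  show ?thesis
  proof (cases "odd t \<and> i = s")
    case True
    then have "s \<noteq> 0" "s \<noteq> s - 1" using one_le_s_if_odd by auto
    then have "nbrs E v \<subseteq> L (s - 1)"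
      using nbr_cases[OF i] True by (auto simp: tree_level_def)
    then have "card (nbrs E v) = card (nbrs E v \<inter> L (s - 1))" by (simp add: Int_absorb2)
    also have "\<dots> = r + 1" using odd_top_degrees True i(2) by blast
    finally show ?thesis by simp
  next
    case False
    define below where "below = (if i = 0 then {vinf} else L (i - 1))"
    define above where "above = (if tree_level i then L (Suc i) else L s)"
    have "nbrs E v \<subseteq> below \<union> above"
    proof
      fix y assume "y \<in> nbrs E v"
      from nbr_cases[OF i this] show "y \<in> below \<union> above"
        using False one_le_s_if_odd by (auto simp: below_def above_def tree_level_def)
    qed
    moreover have "card (nbrs E v \<inter> below) \<le> 1"
    proof (cases "i = 0")
      case True
      then show ?thesis using card_mono[of "{vinf}" "nbrs E v \<inter> {vinf}"] by (simp add: below_def)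
    next
      case False
      then have "tree_level (i - 1)" "Suc (i - 1) = i"
        using \<open>\<not> (odd t \<and> i = s)\<close> i(1) by (auto simp: tree_level_def)
      then show ?thesis using tree_level_degrees i(2) False by (auto simp: below_def)
    qed
    moreover have "card (nbrs E v \<inter> above) \<le> r"
    proof (cases "tree_level i")
      case False
      then have "(even t \<and> i = s) \<or> (odd t \<and> i = s - 1)"
        using \<open>\<not> (odd t \<and> i = s)\<close> i(1) by (auto simp: tree_level_def split: if_splits)
      then show ?thesis using False even_top_degree odd_top_degrees i(2) by (auto simp: above_def)
    qed (use tree_level_degrees i(2) in \<open>simp add: above_def\<close>)
    ultimately show ?thesis
      using card_le_if_subset_Un[OF finite_nbrs[OF simple]] by (metis add.commute)
  qed
qed

lemma card_incident_edges_le: "v \<in> V - {vinf} \<Longrightarrow> card (incident_edges E v) \<le> r + 1"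
  using card_incident_edges_le_card_nbrs[OF simple, of v] card_nbrs_le[of v] by simp

end

lemma incidence_associated_pcm:
  "associated_pcm V E vinf (\<lambda>v e. if v \<in> e then 1 else 0 :: 'f::field)"
  by (simp add: associated_pcm_def)

theorem mainTheorem5:
  fixes V :: "'v set" and E :: "'v set set" and vinf :: 'v
    and r t a0 :: nat
  assumes G: "is_staircase r t a0 V E vinf"
  shows "(seq_LRC E (card E) (code_dim (binary_code V E vinf)) r t (binary_code V E vinf)
            \<longleftrightarrow> girth V E \<ge> enat (t + 1))
       \<and> (girth V E \<ge> enat (t + 1) \<longrightarrow>
            (\<forall>H :: 'v \<Rightarrow> 'v set \<Rightarrow> 'f::{field,finite}. associated_pcm V E vinf H \<longrightarrow>
               seq_LRC E (card E) (code_dim (code_of_pcm V E vinf H)) r t (code_of_pcm V E vinf H)))"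
proof -
  obtain L where "staircase r t a0 V E vinf L"
    using G unfolding is_staircase_def staircase_def by blast
  then interpret staircase r t a0 V E vinf L .
  have code_seq_LRC: "seq_LRC E (card E) (code_dim (code_of_pcm V E vinf H)) r t (code_of_pcm V E vinf H)"
    if "enat (t + 1) \<le> girth V E" "associated_pcm V E vinf H" for H :: "'v \<Rightarrow> 'v set \<Rightarrow> 'g::field"
    using simple card_incident_edges_le that by (rule code_of_pcm_seq_LRC)
  show ?thesis
    using girth_if_binary_code_seq_LRC[OF simple] code_seq_LRC[OF _ incidence_associated_pcm]
      code_seq_LRC
    unfolding binary_code_def by blast
qed

end
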